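(* Let $n\ge 1$. If there exist a commutative ring $R$, an injective group homomorphism $\iota:\mu_n\to R^\times$, and an $\mathbb{S}[\mu_{n,+}]$-generator $X\in R$, then $n+1$ is a prime power.
   Context: $\mu_n$ is the group of $n$-th roots of unity. With $\iota(0):=0$, $X\in R$ is an $\mathbb{S}[\mu_{n,+}]$-generator of $R$ if every $z\in R$ can be written uniquely as a finite sum $\sum_j\iota(\alpha_j)X^j$ with $\alpha_j\in\mu_n\cup\{0\}$. *)

theory Defs
  imports Complex_Main "HOL-Computational_Algebra.Primes"
begin

definition mu :: "nat \<Rightarrow> complex set" where
  "mu n = {z. z ^ n = 1}"

definition inj_unit_hom :: "nat \<Rightarrow> (complex \<Rightarrow> 'a::comm_ring_1) \<Rightarrow> bool" where
  "inj_unit_hom n \<iota> \<longleftrightarrow>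
     (\<forall>a\<in>mu n. \<iota> a dvd 1) \<and>
     (\<forall>a\<in>mu n. \<forall>b\<in>mu n. \<iota> (a * b) = \<iota> a * \<iota> b) \<and>
     inj_on \<iota> (mu n)"

definition iota_ext :: "(complex \<Rightarrow> 'a::comm_ring_1) \<Rightarrow> complex \<Rightarrow> 'a" where
  "iota_ext \<iota> a = (if a = 0 then 0 else \<iota> a)"

definition digit_sum :: "(complex \<Rightarrow> 'a::comm_ring_1) \<Rightarrow> 'a \<Rightarrow> (nat \<Rightarrow> complex) \<Rightarrow> 'a" where
  "digit_sum \<iota> X \<alpha> = (\<Sum>j\<in>{j. \<alpha> j \<noteq> 0}. iota_ext \<iota> (\<alpha> j) * X ^ j)"

definition S_mu_generator :: "nat \<Rightarrow> (complex \<Rightarrow> 'a::comm_ring_1) \<Rightarrow> 'a \<Rightarrow> bool" where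
  "S_mu_generator n \<iota> X \<longleftrightarrow>
     (\<forall>z::'a. \<exists>!\<alpha>::nat \<Rightarrow> complex.
        (\<forall>j. \<alpha> j \<in> mu n \<union> {0}) \<and> finite {j. \<alpha> j \<noteq> 0} \<and> z = digit_sum \<iota> X \<alpha>)"

end

theory Submission
  imports Defs "HOL-Algebra.Sylow" "HOL-Algebra.Multiplicative_Group" "HOL-Library.Nat_Bijection"
begin

(* The generator property says that the elements iota_ext c, c \<in> mu n \<union> {0}, form a complete
   residue system of R modulo X (an element is congruent to its lowest digit), so R/XR has n + 1
   elements; every nonzero class contains a unit, so R/XR is a field.  A finite field has
   prime-power order: by Cauchy's theorem every prime r dividing its order annihilates a nonzero,
   hence invertible, class, so X divides r; two distinct such primes would give X dvd 1 by Bezout. *)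

lemma prime_power_if_unique_prime_divisor:
  fixes m :: nat
  assumes "m \<ge> 2" and unique: "\<And>p q. prime p \<Longrightarrow> prime q \<Longrightarrow> p dvd m \<Longrightarrow> q dvd m \<Longrightarrow> p = q"
  shows "\<exists>p k. prime p \<and> k \<ge> 1 \<and> m = p ^ k"
proof -
  obtain p where p: "prime p" "p dvd m"
    using assms(1) prime_factor_nat[of m] by auto
  have "prime_factors m = {p}"
    using p unique assms(1) by (auto simp: in_prime_factors_iff)
  then have "m = p ^ multiplicity p m"
    using prod_prime_factors[of m] assms(1) by simp
  moreover have "multiplicity p m \<ge> 1"
    using p assms(1) by (simp add: prime_multiplicity_gt_zero_iff Suc_le_eq)
  ultimately show ?thesis
    using p by blast
qed

lemma dvd_one_if_dvd_coprime_of_nat: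
  fixes X :: "'a::comm_ring_1"
  assumes "coprime p q" "X dvd of_nat p" "X dvd of_nat q"
  shows "X dvd 1"
proof -
  obtain u v :: int where "u * int p + v * int q = 1"
    using bezout_int[of "int p" "int q"] assms(1) by (auto simp: coprime_imp_gcd_eq_1)
  then have "(1::'a) = of_int u * of_nat p + of_int v * of_nat q"
    by (metis of_int_1 of_int_add of_int_mult of_int_of_nat_eq)
  then show ?thesis
    using assms(2,3) by (metis dvd_add dvd_mult)
qed

lemma (in group) Cauchy_theorem:
  assumes "finite (carrier G)" "prime p" "p dvd order G"
  shows "\<exists>x\<in>carrier G. x \<noteq> \<one> \<and> x [^] p = \<one>"
proof -
  have "order G = p ^ 1 * (order G div p)"
    using assms(3) by simp
  then obtain H where H: "subgroup H G" "card H = p"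
    using sylow_thm[OF assms(2) is_group _ assms(1)] by (metis power_one_right)
  then have "H \<noteq> {\<one>}"
    using prime_gt_1_nat[OF assms(2)] by auto
  then obtain x where x: "x \<in> H" "x \<noteq> \<one>"
    using subgroup.one_closed[OF H(1)] by blast
  have "x [^]\<^bsub>G\<lparr>carrier := H\<rparr>\<^esub> card H = \<one>\<^bsub>G\<lparr>carrier := H\<rparr>\<^esub>"
    using group.pow_order_eq_1[OF subgroup_imp_group[OF H(1)]] x(1) by (simp add: order_def)
  then have "x [^] p = \<one>"
    using H nat_pow_consistent[of x p H] by simp
  then show ?thesis
    using x subgroup.mem_carrier[OF H(1)] by blast
qed

locale residue_system =
  fixes X :: "'a::comm_ring_1" and D :: "'a set"
  assumes unique_residue: "\<exists>!d\<in>D. X dvd z - d"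
begin

definition red :: "'a \<Rightarrow> 'a" where
  "red z = (THE d. d \<in> D \<and> X dvd z - d)"

lemma red_mem: "red z \<in> D" and dvd_sub_red: "X dvd z - red z"
  using theI'[OF unique_residue[of z]] unfolding red_def by blast+

lemma red_eqI: "d \<in> D \<Longrightarrow> X dvd z - d \<Longrightarrow> red z = d"
  unfolding red_def using unique_residue by blast

lemma red_of_mem: "d \<in> D \<Longrightarrow> red d = d"
  by (rule red_eqI) simp_all

lemma red_cong:
  assumes "X dvd z - w"
  shows "red z = red w"
proof (rule red_eqI[OF red_mem])
  have "z - red w = (z - w) + (w - red w)"
    by simp
  then show "X dvd z - red w"
    using assms dvd_sub_red by (metis dvd_add)
qed

lemma red_add_red: "red (red z + w) = red (z + w)"
proof (rule red_cong)
  have "red z + w - (z + w) = - (z - red z)"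
    by simp
  then show "X dvd red z + w - (z + w)"
    using dvd_sub_red[of z] by (simp only: dvd_minus_iff)
qed

lemma red_eq_red_0_iff: "red z = red 0 \<longleftrightarrow> X dvd z"
proof
  assume "red z = red 0"
  then show "X dvd z"
    using dvd_sub_red[of z] dvd_sub_red[of 0] by (metis diff_0 diff_add_cancel dvd_add dvd_minus_iff)
qed (simp add: red_cong)

text \<open>The additive group of R/XR, carried by the representatives in D.\<close>

definition residue_group :: "'a monoid" where
  "residue_group = \<lparr>carrier = D, mult = (\<lambda>a b. red (a + b)), one = red 0\<rparr>"

lemma residue_group_is_group: "group residue_group"
proof (rule groupI)
  fix x y z
  show "x \<otimes>\<^bsub>residue_group\<^esub> y \<in> carrier residue_group"
    by (simp add: residue_group_def red_mem)
  show "x \<otimes>\<^bsub>residue_group\<^esub> y \<otimes>\<^bsub>residue_group\<^esub> z = x \<otimes>\<^bsub>residue_group\<^esub> (y \<otimes>\<^bsub>residue_group\<^esub> z)"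
    using red_add_red[of "x + y" z] red_add_red[of "y + z" x]
    by (simp add: residue_group_def ac_simps)
next
  fix x
  assume x: "x \<in> carrier residue_group"
  then show "\<one>\<^bsub>residue_group\<^esub> \<otimes>\<^bsub>residue_group\<^esub> x = x"
    by (simp add: residue_group_def red_add_red red_of_mem)
  have "red (red (- x) + x) = red 0"
    by (simp add: red_add_red)
  then show "\<exists>y\<in>carrier residue_group. y \<otimes>\<^bsub>residue_group\<^esub> x = \<one>\<^bsub>residue_group\<^esub>"
    by (auto simp: residue_group_def red_mem)
qed (simp add: residue_group_def red_mem)

lemma residue_group_pow: "x [^]\<^bsub>residue_group\<^esub> k = red (of_nat k * x)"
proof (induction k)
  case (Suc k)
  then have "x [^]\<^bsub>residue_group\<^esub> Suc k = red (red (of_nat k * x) + x)"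
    by (simp add: residue_group_def)
  also have "\<dots> = red (of_nat (Suc k) * x)"
    by (simp only: red_add_red) (simp add: algebra_simps)
  finally show ?case .
qed (simp add: residue_group_def)

lemma prime_dvd_card_imp_zero_divisor:
  assumes "finite D" "prime r" "r dvd card D"
  shows "\<exists>d. \<not> X dvd d \<and> X dvd of_nat r * d"
proof -
  interpret residue_group: group residue_group
    by (rule residue_group_is_group)
  obtain x where "x \<in> D" "x \<noteq> red 0" "x [^]\<^bsub>residue_group\<^esub> r = red 0"
    using residue_group.Cauchy_theorem[of r] assms by (auto simp: residue_group_def order_def)
  then have "\<not> X dvd x" "X dvd of_nat r * x"
    by (simp_all add: red_eq_red_0_iff red_of_mem residue_group_pow flip: red_eq_red_0_iff)
  then show ?thesis
    by blast
qed

theorem card_eq_prime_power_if_invertible: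
  assumes "finite D" "card D \<ge> 2"
    and invertible: "\<And>z. \<not> X dvd z \<Longrightarrow> \<exists>u. X dvd z * u - 1"
  shows "\<exists>p k. prime p \<and> k \<ge> 1 \<and> card D = p ^ k"
proof (rule prime_power_if_unique_prime_divisor[OF assms(2)])
  have X_dvd_prime: "X dvd of_nat r" if r: "prime r" "r dvd card D" for r
  proof -
    obtain d where d: "\<not> X dvd d" "X dvd of_nat r * d"
      using prime_dvd_card_imp_zero_divisor[OF assms(1) r] by blast
    then obtain u where u: "X dvd d * u - 1"
      using invertible by blast
    have "of_nat r = of_nat r * d * u - of_nat r * (d * u - 1)"
      by (simp add: algebra_simps)
    then show ?thesis
      using d(2) u by (metis dvd_diff dvd_mult dvd_mult2)
  qed
  have "\<not> X dvd 1"
  proof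
    assume "X dvd 1"
    then have "d = red 0" if "d \<in> D" for d
      using red_of_mem[OF that] red_cong[of d 0] by (simp add: dvd_trans[OF \<open>X dvd 1\<close>])
    then have "card D \<le> card {red 0}"
      by (intro card_mono) auto
    then show False
      using assms(2) by simp
  qed
  fix p q
  assume "prime p" "prime q" "p dvd card D" "q dvd card D"
  then show "p = q"
    using \<open>\<not> X dvd 1\<close> X_dvd_prime dvd_one_if_dvd_coprime_of_nat primes_coprime by metis
qed

end

lemma iota_ext_0 [simp]: "iota_ext \<iota> 0 = 0"
  by (simp add: iota_ext_def)

lemma card_mu_insert_0:
  assumes "n \<ge> 1"
  shows "card (mu n \<union> {0}) = n + 1"
proof -
  have "card (mu n) = n"
    using card_roots_unity_eq[of n] assms by (simp add: mu_def)
  moreover have "finite (mu n)"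
    using assms calculation card.infinite by fastforce
  moreover have "0 \<notin> mu n"
    using assms by (simp add: mu_def power_0_left)
  ultimately show ?thesis
    by simp
qed

definition digit_seq :: "nat \<Rightarrow> (nat \<Rightarrow> complex) \<Rightarrow> bool" where
  "digit_seq n \<alpha> \<longleftrightarrow> (\<forall>j. \<alpha> j \<in> mu n \<union> {0}) \<and> finite {j. \<alpha> j \<noteq> 0}"

lemma S_mu_generator_iff:
  "S_mu_generator n \<iota> X \<longleftrightarrow> (\<forall>z. \<exists>!\<alpha>. digit_seq n \<alpha> \<and> z = digit_sum \<iota> X \<alpha>)"
  by (simp add: S_mu_generator_def digit_seq_def conj_assoc)

lemma digit_seq_case_nat:
  "digit_seq n (case_nat a \<beta>) \<longleftrightarrow> a \<in> mu n \<union> {0} \<and> digit_seq n \<beta>"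
proof -
  have "Suc -` {j. case_nat a \<beta> j \<noteq> 0} = {j. \<beta> j \<noteq> 0}"
    by auto
  then have "finite {j. case_nat a \<beta> j \<noteq> 0} \<longleftrightarrow> finite {j. \<beta> j \<noteq> 0}"
    by (metis finite_vimage_Suc_iff)
  moreover have "(\<forall>j. case_nat a \<beta> j \<in> mu n \<union> {0}) \<longleftrightarrow> a \<in> mu n \<union> {0} \<and> (\<forall>j. \<beta> j \<in> mu n \<union> {0})"
    by (metis nat.case nat.exhaust)
  ultimately show ?thesis
    unfolding digit_seq_def by blast
qed

lemma digit_sum_eq_sum_lessThan:
  assumes "{j. \<alpha> j \<noteq> 0} \<subseteq> {..<N}"
  shows "digit_sum \<iota> X \<alpha> = (\<Sum>j<N. iota_ext \<iota> (\<alpha> j) * X ^ j)"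
  unfolding digit_sum_def by (rule sum.mono_neutral_left) (use assms in auto)

lemma digit_sum_case_nat:
  assumes "finite {j. \<beta> j \<noteq> 0}"
  shows "digit_sum \<iota> X (case_nat a \<beta>) = iota_ext \<iota> a + X * digit_sum \<iota> X \<beta>"
proof -
  obtain N where N: "{j. \<beta> j \<noteq> 0} \<subseteq> {..<N}"
    using assms finite_nat_iff_bounded by blast
  then have "{j. case_nat a \<beta> j \<noteq> 0} \<subseteq> {..<Suc N}"
    by (auto split: nat.split_asm)
  then have "digit_sum \<iota> X (case_nat a \<beta>) = (\<Sum>j<Suc N. iota_ext \<iota> (case_nat a \<beta> j) * X ^ j)"
    by (rule digit_sum_eq_sum_lessThan)
  also have "\<dots> = iota_ext \<iota> a + (\<Sum>j<N. iota_ext \<iota> (\<beta> j) * X ^ Suc j)"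
    by (subst sum.lessThan_Suc_shift) simp
  also have "\<dots> = iota_ext \<iota> a + X * (\<Sum>j<N. iota_ext \<iota> (\<beta> j) * X ^ j)"
    by (simp add: sum_distrib_left mult_ac)
  also have "\<dots> = iota_ext \<iota> a + X * digit_sum \<iota> X \<beta>"
    by (simp add: digit_sum_eq_sum_lessThan[OF N])
  finally show ?thesis .
qed

context
  fixes n :: nat and \<iota> :: "complex \<Rightarrow> 'a::comm_ring_1" and X :: 'a
  assumes generator: "S_mu_generator n \<iota> X"
begin

lemma S_mu_generator_ex_residue: "\<exists>c \<in> mu n \<union> {0}. X dvd z - iota_ext \<iota> c"
proof -
  obtain \<alpha> where \<alpha>: "digit_seq n \<alpha>" "z = digit_sum \<iota> X \<alpha>"
    using generator by (metis S_mu_generator_iff)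
  have \<alpha>_split: "\<alpha> = case_nat (\<alpha> 0) (\<lambda>j. \<alpha> (Suc j))"
    by (auto simp: fun_eq_iff split: nat.split)
  then have "\<alpha> 0 \<in> mu n \<union> {0}" "digit_seq n (\<lambda>j. \<alpha> (Suc j))"
    using \<alpha>(1) digit_seq_case_nat by metis+
  moreover from this(2) have "z = iota_ext \<iota> (\<alpha> 0) + X * digit_sum \<iota> X (\<lambda>j. \<alpha> (Suc j))"
    using \<alpha>(2) \<alpha>_split digit_sum_case_nat by (metis digit_seq_def)
  ultimately show ?thesis
    by (intro bexI[of _ "\<alpha> 0"]) simp_all
qed

lemma S_mu_generator_residue_unique:
  assumes "a \<in> mu n \<union> {0}" "b \<in> mu n \<union> {0}" "X dvd iota_ext \<iota> a - iota_ext \<iota> b"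
  shows "a = b"
proof -
  obtain w where w: "iota_ext \<iota> a = iota_ext \<iota> b + X * w"
    using assms(3) by (metis diff_add_cancel dvdE add.commute)
  obtain \<gamma> where \<gamma>: "digit_seq n \<gamma>" "w = digit_sum \<iota> X \<gamma>"
    using generator by (metis S_mu_generator_iff)
  have "digit_seq n (\<lambda>_. 0)"
    by (simp add: digit_seq_def)
  then have admissible: "digit_seq n (case_nat a (\<lambda>_. 0))" "digit_seq n (case_nat b \<gamma>)"
    using assms \<gamma>(1) by (simp_all add: digit_seq_case_nat)
  have "digit_sum \<iota> X (case_nat a (\<lambda>_. 0)) = iota_ext \<iota> a"
    using digit_sum_case_nat[of "\<lambda>_. 0" \<iota> X a] by (simp add: digit_sum_def)
  also have "\<dots> = digit_sum \<iota> X (case_nat b \<gamma>)"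
    using w \<gamma> digit_sum_case_nat[of \<gamma> \<iota> X b] by (simp add: digit_seq_def)
  finally have "case_nat a (\<lambda>_. 0) = case_nat b \<gamma>"
    using admissible generator unfolding S_mu_generator_iff by blast
  then show ?thesis
    by (metis nat.case(1))
qed

lemma S_mu_generator_residue_system: "residue_system X (iota_ext \<iota> ` (mu n \<union> {0}))"
proof
  fix z
  obtain c where c: "c \<in> mu n \<union> {0}" "X dvd z - iota_ext \<iota> c"
    using S_mu_generator_ex_residue by blast
  have "b = c" if "b \<in> mu n \<union> {0}" "X dvd z - iota_ext \<iota> b" for b
  proof (rule S_mu_generator_residue_unique[OF that(1) c(1)])
    have "iota_ext \<iota> b - iota_ext \<iota> c = (z - iota_ext \<iota> c) - (z - iota_ext \<iota> b)"
      by simp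
    then show "X dvd iota_ext \<iota> b - iota_ext \<iota> c"
      using c(2) that(2) by (metis dvd_diff)
  qed
  then show "\<exists>!d\<in>iota_ext \<iota> ` (mu n \<union> {0}). X dvd z - d"
    using c by blast
qed

lemma card_iota_ext_image:
  assumes "n \<ge> 1"
  shows "card (iota_ext \<iota> ` (mu n \<union> {0})) = n + 1"
proof -
  have "inj_on (iota_ext \<iota>) (mu n \<union> {0})"
    by (intro inj_onI S_mu_generator_residue_unique) simp_all
  then show ?thesis
    using card_mu_insert_0[OF assms] by (simp only: card_image)
qed

lemma S_mu_generator_invertible:
  assumes "inj_unit_hom n \<iota>" and "\<not> X dvd z"
  shows "\<exists>u. X dvd z * u - 1"
proof -
  obtain c where c: "c \<in> mu n \<union> {0}" "X dvd z - iota_ext \<iota> c"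
    using S_mu_generator_ex_residue by blast
  have "c \<noteq> 0"
    using c(2) assms(2) by auto
  then have "iota_ext \<iota> c dvd 1"
    using c(1) assms(1) by (simp add: inj_unit_hom_def iota_ext_def)
  then obtain u where u: "1 = iota_ext \<iota> c * u"
    by (rule dvdE)
  have "z * u - 1 = (z - iota_ext \<iota> c) * u"
    by (simp add: u algebra_simps)
  then show ?thesis
    using c(2) by (metis dvd_mult2)
qed

end

theorem corollary5p8:
  fixes n :: nat and \<iota> :: "complex \<Rightarrow> 'a::comm_ring_1" and X :: 'a
  assumes "n \<ge> 1"
    and "inj_unit_hom n \<iota>"
    and "S_mu_generator n \<iota> X"
  shows "\<exists>p k. prime p \<and> k \<ge> 1 \<and> n + 1 = p ^ k"
proof -
  interpret residue_system X "iota_ext \<iota> ` (mu n \<union> {0})"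
    by (rule S_mu_generator_residue_system[OF assms(3)])
  have card: "card (iota_ext \<iota> ` (mu n \<union> {0})) = n + 1"
    by (rule card_iota_ext_image[OF assms(3,1)])
  have "finite (iota_ext \<iota> ` (mu n \<union> {0}))"
    by (intro card_ge_0_finite) (use card in linarith)
  then show ?thesis
    using card_eq_prime_power_if_invertible S_mu_generator_invertible[OF assms(3,2)] card assms(1)
    by simp
qed

end
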